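(* Let $z$ lie in the upper half-plane and let $E_4,\Delta_{24}$ and $\rho_n$ be as in the context. Then for every positive integer $n$, $$\rho_n(z)=\sum_{i=0}^{\lfloor n/3\rfloor}\frac{2n+3}{2i+1}\binom{n-i}{2i}2^{8i}\Delta_{24}(z)^iE_4(z)^{n-3i}.$$
   Context: For $z$ with $\mathrm{Im}(z)>0$ put $q=e^{\pi\sqrt{-1}z}$ and define $\vartheta_2(z)=\sum_{m\in\mathbb{Z}}q^{(m+1/2)^2}$, $\vartheta_3(z)=\sum_{m\in\mathbb{Z}}q^{m^2}$, $\vartheta_4(z)=\sum_{m\in\mathbb{Z}}(-q)^{m^2}$. Define $E_4(z)=\frac12(\vartheta_2(z)^8+\vartheta_3(z)^8+\vartheta_4(z)^8)$, $\Delta_{24}(z)=\left(\frac{\vartheta_2(z)\vartheta_3(z)\vartheta_4(z)}{2}\right)^8$, and for a nonnegative integer $n$, $$\rho_n(z)=\frac{\vartheta_3(z)^{8(n+1)+4}-\vartheta_2(z)^{8(n+1)+4}-\vartheta_4(z)^{8(n+1)+4}}{(\vartheta_2(z)\vartheta_3(z)\vartheta_4(z))^4}.$$ *)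

theory Defs
  imports "HOL-Analysis.Analysis"
begin

text \<open>q = exp(pi i z); q powered to a real exponent r means exp(pi i z r).\<close>

definition theta2 :: "complex \<Rightarrow> complex" where
  "theta2 z = (\<Sum>\<^sub>\<infinity>m::int. exp (of_real pi * \<i> * z * (of_int m + 1/2)^2))"

definition theta3 :: "complex \<Rightarrow> complex" where
  "theta3 z = (\<Sum>\<^sub>\<infinity>m::int. exp (of_real pi * \<i> * z * (of_int m)^2))"

text \<open>(-q)^(m^2) = (-1)^(m^2) q^(m^2) = (-1)^m q^(m^2), m^2 being an integer.\<close>
definition theta4 :: "complex \<Rightarrow> complex" where
  "theta4 z = (\<Sum>\<^sub>\<infinity>m::int. (-1) ^ nat (m^2) * exp (of_real pi * \<i> * z * (of_int m)^2))"

definition E4 :: "complex \<Rightarrow> complex" where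
  "E4 z = (theta2 z ^ 8 + theta3 z ^ 8 + theta4 z ^ 8) / 2"

definition Delta24 :: "complex \<Rightarrow> complex" where
  "Delta24 z = ((theta2 z * theta3 z * theta4 z) / 2) ^ 8"

definition rho :: "nat \<Rightarrow> complex \<Rightarrow> complex" where
  "rho n z = (theta3 z ^ (8*(n+1)+4) - theta2 z ^ (8*(n+1)+4) - theta4 z ^ (8*(n+1)+4))
             / (theta2 z * theta3 z * theta4 z) ^ 4"

end

theory Submission
  imports Defs
begin

(* Put a = theta2^4 and b = theta4^4. Jacobi's identity theta3^4 = a + b turns rho_n into
   ((a + b)^(2n+3) - a^(2n+3) - b^(2n+3)) / (a b (a + b)), E4 into a^2 + a b + b^2 and
   2^8 Delta24 into (a b (a + b))^2. Now a, b, -(a + b) are the roots of X^3 - E X + d with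
   E = a^2 + a b + b^2 and d = a b (a + b), so their power sums are expressed through the
   complete homogeneous symmetric polynomials of the roots, the coefficients of
   1/(1 - E t^2 + d t^3) = sum_k (E t^2 - d t^3)^k; expanding the powers produces the
   binomial coefficients.
   Jacobi's identity follows from the duplication formulas, obtained by splitting the double
   series of a product of two theta series according to the parity of m - n. Dividing by
   a b (a + b) is legitimate because theta2, theta3, theta4 have no zeros in the upper
   half-plane: a zero at z would propagate to every 2^k z, but for large Im z each series is
   dominated by its leading term. *)

section \<open>Power sums of the roots of a depressed cubic\<close>

lemma binomial_Suc_absorb: "Suc k * (m choose Suc k) = (m - k) * (m choose k)"
  using times_binomial_minus1_eq[of "Suc k" m] binomial_absorb_comp[of m k] by simp

text \<open>The side condition on the exponents is only needed when the binomial coefficient is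
  nonzero, which absorbs the truncated subtraction in exponents such as \<open>E ^ (n - 3 * i)\<close>.\<close>

lemma of_nat_choose_mult_power_Suc:
  assumes "j \<le> m \<Longrightarrow> k = Suc l"
  shows "x * (of_nat (m choose j) * y * x ^ l) = of_nat (m choose j) * y * (x :: 'a :: comm_semiring_1) ^ k"
  using assms by (cases "j \<le> m") (simp_all add: mult_ac binomial_eq_0)

text \<open>The complete homogeneous symmetric polynomials \<open>h\<^sub>k\<close> of the roots of \<open>X\<^sup>3 - E X + d\<close>.\<close>

fun compl_hom :: "'a :: comm_ring_1 \<Rightarrow> 'a \<Rightarrow> nat \<Rightarrow> 'a" where
  "compl_hom E d 0 = 1"
| "compl_hom E d (Suc 0) = 0"
| "compl_hom E d (Suc (Suc 0)) = E"
| "compl_hom E d (Suc (Suc (Suc k))) = E * compl_hom E d (Suc k) - d * compl_hom E d k"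

lemma linear_recurrence3_eqI:
  fixes f g :: "nat \<Rightarrow> 'a :: comm_ring_1"
  assumes "\<And>k. f (k + 3) = E * f (k + 1) - d * f k"
    and "\<And>k. g (k + 3) = E * g (k + 1) - d * g k"
    and "f 0 = g 0" "f 1 = g 1" "f 2 = g 2"
  shows "f k = g k"
proof -
  have "f k = g k \<and> f (k + 1) = g (k + 1) \<and> f (k + 2) = g (k + 2)"
  proof (induction k)
    case (Suc k)
    then show ?case
      using assms(1,2)[of k] by (simp add: numeral_eq_Suc)
  qed (use assms(3-5) in \<open>simp add: numeral_eq_Suc\<close>)
  then show ?thesis by simp
qed

lemma power_sum_cubic_roots:
  fixes a b :: "'a :: comm_ring_1"
  defines "E \<equiv> a\<^sup>2 + a * b + b\<^sup>2" and "d \<equiv> a * b * (a + b)"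
  shows "a ^ (k + 3) + b ^ (k + 3) + (- (a + b)) ^ (k + 3)
           = 2 * E * compl_hom E d (k + 1) - 3 * d * compl_hom E d k"
proof (rule linear_recurrence3_eqI[where E = E and d = d])
  have step: "x ^ (k + 3 + 3) = E * x ^ (k + 1 + 3) - d * x ^ (k + 3)" if "x ^ 3 = E * x - d" for x :: 'a and k
  proof -
    have "x ^ (k + 3 + 3) = x ^ (k + 3) * x ^ 3" by (rule power_add)
    also have "\<dots> = E * (x ^ (k + 3) * x) - d * x ^ (k + 3)"
      by (simp add: that algebra_simps)
    also have "x ^ (k + 3) * x = x ^ (k + 1 + 3)" using power_Suc2[of x "k + 3"] by simp
    finally show ?thesis .
  qed
  have roots: "a ^ 3 = E * a - d" "b ^ 3 = E * b - d" "(- (a + b)) ^ 3 = E * (- (a + b)) - d"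
    unfolding E_def d_def by (simp_all add: algebra_simps power2_eq_square power3_eq_cube)
  show "a ^ (k + 3 + 3) + b ^ (k + 3 + 3) + (- (a + b)) ^ (k + 3 + 3) =
      E * (a ^ (k + 1 + 3) + b ^ (k + 1 + 3) + (- (a + b)) ^ (k + 1 + 3))
      - d * (a ^ (k + 3) + b ^ (k + 3) + (- (a + b)) ^ (k + 3))" for k
    by (simp only: step[OF roots(1)] step[OF roots(2)] step[OF roots(3)]) (simp add: algebra_simps)
  show "2 * E * compl_hom E d (k + 3 + 1) - 3 * d * compl_hom E d (k + 3) =
      E * (2 * E * compl_hom E d (k + 1 + 1) - 3 * d * compl_hom E d (k + 1))
      - d * (2 * E * compl_hom E d (k + 1) - 3 * d * compl_hom E d k)" for k
    by (simp add: numeral_eq_Suc algebra_simps)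
qed (simp_all add: numeral_eq_Suc E_def d_def power2_eq_square algebra_simps)

text \<open>With \<open>D = d\<^sup>2\<close>, these are the coefficients of t^(2n) and (up to the factor -d) of
  t^(2n+1) in the expansion of \<open>\<Sum>k. (E t\<^sup>2 - d t\<^sup>3)\<^sup>k\<close>.\<close>

definition binom_sum_even :: "'a :: comm_semiring_1 \<Rightarrow> 'a \<Rightarrow> nat \<Rightarrow> 'a" where
  "binom_sum_even D E n = (\<Sum>i\<le>n. of_nat ((n - i) choose (2 * i)) * D ^ i * E ^ (n - 3 * i))"

definition binom_sum_odd :: "'a :: comm_semiring_1 \<Rightarrow> 'a \<Rightarrow> nat \<Rightarrow> 'a" where
  "binom_sum_odd D E n = (\<Sum>i\<le>n. of_nat ((n - i) choose (2 * i + 1)) * D ^ i * E ^ (n - Suc (3 * i)))"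

lemma binom_sum_odd_Suc:
  "binom_sum_odd D E (Suc n) = E * binom_sum_odd D E n + binom_sum_even D E n"
proof -
  have "of_nat ((Suc n - i) choose (2 * i + 1)) * D ^ i * E ^ (Suc n - Suc (3 * i))
      = E * (of_nat ((n - i) choose (2 * i + 1)) * D ^ i * E ^ (n - Suc (3 * i)))
        + of_nat ((n - i) choose (2 * i)) * D ^ i * E ^ (n - 3 * i)" if "i \<le> n" for i
  proof -
    have "E * (of_nat ((n - i) choose (2 * i + 1)) * D ^ i * E ^ (n - Suc (3 * i)))
        = of_nat ((n - i) choose (2 * i + 1)) * D ^ i * E ^ (n - 3 * i)"
      by (rule of_nat_choose_mult_power_Suc) arith
    then show ?thesis
      using that by (simp add: Suc_diff_le algebra_simps)
  qed
  then show ?thesis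
    unfolding binom_sum_odd_def binom_sum_even_def sum_distrib_left sum.distrib [symmetric]
    by (simp add: sum.atMost_Suc)
qed

lemma binom_sum_even_Suc_Suc:
  "binom_sum_even D E (Suc (Suc n)) = E * binom_sum_even D E (Suc n) + D * binom_sum_odd D E n"
proof -
  have shift: "binom_sum_even D E (Suc m) = E ^ Suc m
      + (\<Sum>i\<le>m. of_nat ((m - i) choose (2 * i + 2)) * D ^ Suc i * E ^ (m - (3 * i + 2)))" for m
    unfolding binom_sum_even_def
    by (subst sum.atMost_Suc_shift) (simp add: numeral_eq_Suc)
  have "of_nat ((Suc n - i) choose (2 * i + 2)) * D ^ Suc i * E ^ (Suc n - (3 * i + 2))
      = E * (of_nat ((n - i) choose (2 * i + 2)) * D ^ Suc i * E ^ (n - (3 * i + 2)))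
        + D * (of_nat ((n - i) choose (2 * i + 1)) * D ^ i * E ^ (n - Suc (3 * i)))" if "i \<le> n" for i
  proof -
    have "E * (of_nat ((n - i) choose (2 * i + 2)) * D ^ Suc i * E ^ (n - (3 * i + 2)))
        = of_nat ((n - i) choose (2 * i + 2)) * D ^ Suc i * E ^ (n - Suc (3 * i))"
      by (rule of_nat_choose_mult_power_Suc) arith
    then show ?thesis
      using that by (simp add: Suc_diff_le numeral_eq_Suc algebra_simps)
  qed
  then show ?thesis
    unfolding shift binom_sum_odd_def sum_distrib_left distrib_left
    by (simp add: sum.atMost_Suc sum.distrib add.assoc)
qed

lemma compl_hom_closed_form:
  fixes E d :: "'a :: comm_ring_1"
  shows "compl_hom E d (2 * n) = binom_sum_even (d\<^sup>2) E n"
    and "compl_hom E d (2 * n + 1) = - d * binom_sum_odd (d\<^sup>2) E n"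
proof -
  have "compl_hom E d (2 * n) = binom_sum_even (d\<^sup>2) E n
      \<and> compl_hom E d (2 * n + 1) = - d * binom_sum_odd (d\<^sup>2) E n
      \<and> compl_hom E d (2 * n + 2) = binom_sum_even (d\<^sup>2) E (Suc n)"
  proof (induction n)
    case 0
    then show ?case by (simp add: binom_sum_even_def binom_sum_odd_def binomial_eq_0)
  next
    case (Suc n)
    have "compl_hom E d (2 * Suc n + 1) = E * compl_hom E d (2 * n + 1) - d * compl_hom E d (2 * n)"
      "compl_hom E d (2 * Suc n + 2) = E * compl_hom E d (2 * n + 2) - d * compl_hom E d (2 * n + 1)"
      by (simp_all add: numeral_eq_Suc)
    with Suc.IH show ?case
      by (simp add: binom_sum_odd_Suc binom_sum_even_Suc_Suc power2_eq_square algebra_simps)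
  qed
  then show "compl_hom E d (2 * n) = binom_sum_even (d\<^sup>2) E n"
    and "compl_hom E d (2 * n + 1) = - d * binom_sum_odd (d\<^sup>2) E n"
    by simp_all
qed

lemma power_sum_coefficient_eq:
  assumes "3 * i \<le> n"
  shows "of_nat (2 * n + 3) / of_nat (2 * i + 1) * of_nat ((n - i) choose (2 * i))
    = 2 * of_nat ((n - i) choose (2 * i + 1)) + 3 * (of_nat ((n - i) choose (2 * i)) :: 'a :: field_char_0)"
proof -
  have "(2 * i + 1) * ((n - i) choose (2 * i + 1)) = (n - 3 * i) * ((n - i) choose (2 * i))"
    using binomial_Suc_absorb[of "2 * i" "n - i"] by (simp add: diff_diff_add)
  then have "(2 * n + 3) * ((n - i) choose (2 * i))
      = (2 * i + 1) * (2 * ((n - i) choose (2 * i + 1)) + 3 * ((n - i) choose (2 * i)))"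
    using assms by (simp add: algebra_simps add_mult_distrib [symmetric])
  then have "of_nat (2 * n + 3) * of_nat ((n - i) choose (2 * i))
      = of_nat (2 * i + 1) * (2 * of_nat ((n - i) choose (2 * i + 1)) + 3 * (of_nat ((n - i) choose (2 * i)) :: 'a))"
    by (metis (mono_tags, lifting) of_nat_add of_nat_mult of_nat_numeral)
  then show ?thesis
    by (simp add: field_simps del: of_nat_Suc of_nat_add of_nat_mult)
qed

lemma power_sum_difference_expansion:
  fixes a b :: "'a :: field_char_0"
  shows "(a + b) ^ (2 * n + 3) - a ^ (2 * n + 3) - b ^ (2 * n + 3) = a * b * (a + b) *
    (\<Sum>i=0..n div 3. of_nat (2 * n + 3) / of_nat (2 * i + 1) * of_nat ((n - i) choose (2 * i))
       * (a * b * (a + b)) ^ (2 * i) * (a\<^sup>2 + a * b + b\<^sup>2) ^ (n - 3 * i))"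
proof -
  define E where "E = a\<^sup>2 + a * b + b\<^sup>2"
  define d where "d = a * b * (a + b)"
  have "(a + b) ^ (2 * n + 3) - a ^ (2 * n + 3) - b ^ (2 * n + 3)
      = - (a ^ (2 * n + 3) + b ^ (2 * n + 3) + (- (a + b)) ^ (2 * n + 3))"
    using power_minus_odd[of "2 * n + 3" "a + b"] by (simp add: minus_diff_eq)
  also have "\<dots> = - (2 * E * compl_hom E d (2 * n + 1) - 3 * d * compl_hom E d (2 * n))"
    unfolding E_def d_def by (subst power_sum_cubic_roots) (rule refl)
  also have "\<dots> = d * (2 * (E * binom_sum_odd (d\<^sup>2) E n) + 3 * binom_sum_even (d\<^sup>2) E n)"
    unfolding compl_hom_closed_form by (simp add: algebra_simps)
  also have "2 * (E * binom_sum_odd (d\<^sup>2) E n) + 3 * binom_sum_even (d\<^sup>2) E n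
      = (\<Sum>i\<le>n. (2 * of_nat ((n - i) choose (2 * i + 1)) + 3 * of_nat ((n - i) choose (2 * i)))
          * (d\<^sup>2) ^ i * E ^ (n - 3 * i))"
  proof -
    have "E * (of_nat ((n - i) choose (2 * i + 1)) * (d\<^sup>2) ^ i * E ^ (n - Suc (3 * i)))
        = of_nat ((n - i) choose (2 * i + 1)) * (d\<^sup>2) ^ i * E ^ (n - 3 * i)" for i
      by (rule of_nat_choose_mult_power_Suc) arith
    then show ?thesis
      unfolding binom_sum_odd_def binom_sum_even_def sum_distrib_left sum.distrib [symmetric]
      by (intro sum.cong refl) (simp only:, simp add: algebra_simps)
  qed
  also have "\<dots> = (\<Sum>i=0..n div 3. (2 * of_nat ((n - i) choose (2 * i + 1)) + 3 * of_nat ((n - i) choose (2 * i)))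
          * (d\<^sup>2) ^ i * E ^ (n - 3 * i))"
    by (rule sum.mono_neutral_right) (auto simp: binomial_eq_0)
  also have "\<dots> = (\<Sum>i=0..n div 3. of_nat (2 * n + 3) / of_nat (2 * i + 1) * of_nat ((n - i) choose (2 * i))
          * d ^ (2 * i) * E ^ (n - 3 * i))"
  proof (intro sum.cong refl)
    fix i assume "i \<in> {0..n div 3}"
    then have "3 * i \<le> n" by auto
    then show "(2 * of_nat ((n - i) choose (2 * i + 1)) + 3 * of_nat ((n - i) choose (2 * i)))
          * (d\<^sup>2) ^ i * E ^ (n - 3 * i)
        = of_nat (2 * n + 3) / of_nat (2 * i + 1) * of_nat ((n - i) choose (2 * i))
          * d ^ (2 * i) * E ^ (n - 3 * i)"
      by (simp only: power_sum_coefficient_eq power_mult)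
  qed
  finally show ?thesis
    by (simp add: E_def d_def)
qed

section \<open>Series over the integers\<close>

lemma has_sum_power_abs_int:
  fixes r :: real
  assumes "0 \<le> r" "r < 1"
  shows "((\<lambda>m::int. r ^ nat \<bar>m\<bar>) has_sum (2 * r / (1 - r))) (- {0})"
proof -
  have pos: "((\<lambda>m::int. r ^ nat \<bar>m\<bar>) has_sum (r / (1 - r))) {1..}"
    using has_sum_geometric_from_1[of r] assms
    by (subst has_sum_reindex_bij_witness[where i = nat and j = int, symmetric]) auto
  moreover have "((\<lambda>m::int. r ^ nat \<bar>m\<bar>) has_sum (r / (1 - r))) {..-1}"
    using pos by (subst has_sum_reindex_bij_witness[where i = uminus and j = uminus, symmetric]) auto
  ultimately have "((\<lambda>m::int. r ^ nat \<bar>m\<bar>) has_sum (r / (1 - r) + r / (1 - r))) ({1..} \<union> {..-1})"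
    by (rule has_sum_Un_disjoint) auto
  moreover have "{1..} \<union> {..-1} = - {0::int}"
    by auto
  ultimately show ?thesis
    by simp
qed

lemma summable_on_power_abs_int:
  fixes r :: real
  assumes "0 \<le> r" "r < 1"
  shows "(\<lambda>m::int. r ^ nat \<bar>m\<bar>) summable_on UNIV"
proof -
  have "(\<lambda>m::int. r ^ nat \<bar>m\<bar>) summable_on (- {0})"
    using has_sum_power_abs_int[OF assms] by (auto simp: summable_on_def)
  then have "(\<lambda>m::int. r ^ nat \<bar>m\<bar>) summable_on (- {0} \<union> {0})"
    by (rule summable_on_Un_disjoint) auto
  moreover have "- {0} \<union> {0} = (UNIV :: int set)"
    by auto
  ultimately show ?thesis
    by simp
qed

lemma
  fixes f g :: "'a :: countable \<Rightarrow> complex"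
  assumes "f summable_on UNIV" "g summable_on UNIV"
  shows summable_on_mult_pairs: "(\<lambda>(x, y). f x * g y) summable_on UNIV"
    and infsum_mult_infsum: "infsum f UNIV * infsum g UNIV = (\<Sum>\<^sub>\<infinity>(x, y). f x * g y)"
proof -
  have abs: "Infinite_Set_Sum.abs_summable_on f UNIV" "Infinite_Set_Sum.abs_summable_on g UNIV"
    using assms by (simp_all add: summable_on_iff_abs_summable_on_complex abs_summable_equivalent)
  then have prod: "Infinite_Set_Sum.abs_summable_on (\<lambda>(x, y). f x * g y) (UNIV \<times> UNIV)"
    "infsetsum (\<lambda>(x, y). f x * g y) (UNIV \<times> UNIV) = infsetsum f UNIV * infsetsum g UNIV"
    by (intro abs_summable_on_product infsetsum_product abs countableI_type)+
  then show "(\<lambda>(x, y). f x * g y) summable_on UNIV"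
    by (simp add: summable_on_iff_abs_summable_on_complex abs_summable_equivalent)
  show "infsum f UNIV * infsum g UNIV = (\<Sum>\<^sub>\<infinity>(x, y). f x * g y)"
    using prod abs by (simp add: infsetsum_infsum)
qed

lemma infsum_int_pairs_parity_split:
  fixes g :: "int \<times> int \<Rightarrow> 'a :: banach"
  assumes "g summable_on UNIV"
  shows "infsum g UNIV = (\<Sum>\<^sub>\<infinity>(u, v). g (u + v, u - v)) + (\<Sum>\<^sub>\<infinity>(u, v). g (u + v + 1, u - v))"
proof -
  define Ev where "Ev = {p :: int \<times> int. even (fst p + snd p)}"
  have "infsum g UNIV = infsum g Ev + infsum g (- Ev)"
    using assms by (intro infsum_Un_disjoint [of g Ev "- Ev", simplified]) (auto intro: summable_on_subset_banach)
  moreover have "(\<Sum>\<^sub>\<infinity>(u, v). g (u + v, u - v)) = infsum g Ev"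
    by (rule infsum_reindex_bij_witness[where j = "\<lambda>(u, v). (u + v, u - v)"
          and i = "\<lambda>(m, n). ((m + n) div 2, (m - n) div 2)"]) (auto simp: Ev_def, presburger+)
  moreover have "(\<Sum>\<^sub>\<infinity>(u, v). g (u + v + 1, u - v)) = infsum g (- Ev)"
    by (rule infsum_reindex_bij_witness[where j = "\<lambda>(u, v). (u + v + 1, u - v)"
          and i = "\<lambda>(m, n). ((m + n - 1) div 2, (m - n - 1) div 2)"]) (auto simp: Ev_def, presburger+)
  ultimately show ?thesis
    by simp
qed

lemma norm_infsum_minus_sum_le:
  fixes f :: "int \<Rightarrow> complex" and r :: real
  assumes "f summable_on UNIV" "finite F" "0 \<in> F" "0 \<le> r" "r < 1"
    and bound: "\<And>m. m \<notin> F \<Longrightarrow> norm (f m) \<le> r ^ nat \<bar>m\<bar>"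
  shows "norm (infsum f UNIV - sum f F) \<le> 2 * r / (1 - r)"
proof -
  have summable: "f summable_on (- F)"
    using assms(1) by (rule summable_on_subset_banach) auto
  have "infsum f UNIV = infsum f (F \<union> - F)"
    by simp
  also have "\<dots> = sum f F + infsum f (- F)"
    using summable assms(2) by (subst infsum_Un_disjoint) auto
  finally have tail: "infsum f UNIV - sum f F = infsum f (- F)"
    by simp
  have geometric: "((\<lambda>m::int. r ^ nat \<bar>m\<bar>) has_sum (2 * r / (1 - r))) (- {0})"
    using assms(4,5) by (rule has_sum_power_abs_int)
  have "norm (infsum f (- F)) \<le> infsum (\<lambda>m. norm (f m)) (- F)"
    using summable by (intro norm_infsum_bound) (simp add: summable_on_iff_abs_summable_on_complex)
  also have "\<dots> \<le> infsum (\<lambda>m::int. r ^ nat \<bar>m\<bar>) (- {0})"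
    using summable geometric bound assms(3,4)
    by (intro infsum_mono_neutral) (auto simp: summable_on_iff_abs_summable_on_complex summable_on_def)
  also have "\<dots> = 2 * r / (1 - r)"
    using geometric by (simp add: has_sum_iff)
  finally show ?thesis
    unfolding tail .
qed

lemma square_ge_abs_minus: "\<bar>x\<bar> - 1/4 \<le> (x :: real)\<^sup>2"
  using sum_power2_ge_zero[of "\<bar>x\<bar> - 1/2" 0] by (simp add: power2_eq_square algebra_simps)

lemma abs_le_square_int: "\<bar>m\<bar> \<le> (m :: int)\<^sup>2"
proof (cases "m = 0")
  case False
  then have "\<bar>m\<bar> * 1 \<le> \<bar>m\<bar> * \<bar>m\<bar>"
    by (intro mult_left_mono) auto
  then show ?thesis
    by (simp add: power2_eq_square abs_mult_self_eq)
qed simp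

lemma abs_le_square_plus_int:
  assumes "m \<notin> {0, - 1}"
  shows "\<bar>m\<bar> \<le> (m :: int)\<^sup>2 + m"
proof (cases "m > 0")
  case True
  then show ?thesis
    by simp
next
  case False
  with assms have "m \<le> - 2"
    by auto
  then have "0 \<le> (- m) * (- (m + 2))"
    by (intro mult_nonneg_nonneg) auto
  with False show ?thesis
    by (simp add: power2_eq_square algebra_simps)
qed

section \<open>Theta functions with characteristics\<close>

definition qpow :: "complex \<Rightarrow> real \<Rightarrow> complex" where
  "qpow z x = exp (of_real pi * \<i> * z * of_real x)"

lemma norm_qpow: "norm (qpow z x) = exp (- pi * Im z * x)"
  by (simp add: qpow_def)

lemma qpow_add: "qpow z x * qpow z y = qpow z (x + y)"
  by (simp add: qpow_def algebra_simps flip: exp_add)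

lemma qpow_double: "qpow (2 * z) x = qpow z (2 * x)"
  by (simp add: qpow_def mult_ac)

lemma qpow_nonzero: "qpow z x \<noteq> 0"
  by (simp add: qpow_def)

text \<open>A variant of the theta function with characteristics \<open>[\<alpha>; \<beta>]\<close>, with phase exp(pi i beta m)
  instead of exp(2 pi i beta (m + alpha)); \<open>theta2\<close>, \<open>theta3\<close>, \<open>theta4\<close> are the characteristics
  \<open>[1/2; 0]\<close>, \<open>[0; 0]\<close> and \<open>[0; 1]\<close>.\<close>

definition theta_term :: "real \<Rightarrow> real \<Rightarrow> complex \<Rightarrow> int \<Rightarrow> complex" where
  "theta_term \<alpha> \<beta> z m = cis (pi * \<beta> * of_int m) * qpow z ((of_int m + \<alpha>)\<^sup>2)"

definition theta_char :: "real \<Rightarrow> real \<Rightarrow> complex \<Rightarrow> complex" where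
  "theta_char \<alpha> \<beta> z = (\<Sum>\<^sub>\<infinity>m. theta_term \<alpha> \<beta> z m)"

lemma theta3_eq_theta_char: "theta3 z = theta_char 0 0 z"
  by (simp add: theta3_def theta_char_def theta_term_def qpow_def)

lemma theta2_eq_theta_char: "theta2 z = theta_char (1/2) 0 z"
  by (simp add: theta2_def theta_char_def theta_term_def qpow_def)

lemma cis_pi_times_int: "cis (pi * of_int m) = (-1) ^ nat (m\<^sup>2)"
  by (simp add: cis.ctr complex_eq_iff minus_one_power_iff even_nat_iff)

lemma theta4_eq_theta_char: "theta4 z = theta_char 0 1 z"
  by (simp add: theta4_def theta_char_def theta_term_def qpow_def cis_pi_times_int)

lemma norm_theta_term: "norm (theta_term \<alpha> \<beta> z m) = exp (- pi * Im z * (of_int m + \<alpha>)\<^sup>2)"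
  by (simp add: theta_term_def norm_mult norm_qpow)

lemma summable_theta_term:
  assumes "Im z > 0"
  shows "theta_term \<alpha> \<beta> z summable_on UNIV"
proof -
  define r where "r = exp (- pi * Im z)"
  have r: "0 \<le> r" "r < 1"
    using assms by (simp_all add: r_def)
  have "norm (theta_term \<alpha> \<beta> z m) \<le> exp (pi * Im z * (\<bar>\<alpha>\<bar> + 1/4)) * r ^ nat \<bar>m\<bar>" for m
  proof -
    have "\<bar>of_int m\<bar> - \<bar>\<alpha>\<bar> - 1/4 \<le> (of_int m + \<alpha>)\<^sup>2"
      using square_ge_abs_minus[of "of_int m + \<alpha>"] by linarith
    then have "pi * Im z * (\<bar>of_int m\<bar> - \<bar>\<alpha>\<bar> - 1/4) \<le> pi * Im z * (of_int m + \<alpha>)\<^sup>2"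
      using assms by (intro mult_left_mono) auto
    then have "- pi * Im z * (of_int m + \<alpha>)\<^sup>2 \<le> pi * Im z * (\<bar>\<alpha>\<bar> + 1/4) + of_int \<bar>m\<bar> * (- pi * Im z)"
      by (simp add: algebra_simps)
    then show ?thesis
      by (simp add: norm_theta_term r_def exp_add [symmetric] flip: exp_of_nat_mult)
  qed
  then have "(\<lambda>m. norm (theta_term \<alpha> \<beta> z m)) summable_on UNIV"
    using r by (intro Infinite_Sum.abs_summable_on_comparison_test'[OF summable_on_cmult_right[OF summable_on_power_abs_int]])
  then show ?thesis
    by (simp add: summable_on_iff_abs_summable_on_complex)
qed

lemma theta_term_pair_double:
  "theta_term \<alpha> s z (u + v + e) * theta_term \<beta> t z (u - v) = cis (pi * s * of_int e)
     * (theta_term ((of_int e + \<alpha> + \<beta>) / 2) (s + t) (2 * z) u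
        * theta_term ((of_int e + \<alpha> - \<beta>) / 2) (s - t) (2 * z) v)"
proof -
  have phase: "cis (pi * s * of_int (u + v + e)) * cis (pi * t * of_int (u - v))
      = cis (pi * s * of_int e) * (cis (pi * (s + t) * of_int u) * cis (pi * (s - t) * of_int v))"
    unfolding cis_mult by (rule arg_cong [where f = cis]) (simp add: algebra_simps)
  have "(of_int (u + v + e) + \<alpha>)\<^sup>2 + (of_int (u - v) + \<beta>)\<^sup>2
      = 2 * (of_int u + (of_int e + \<alpha> + \<beta>) / 2)\<^sup>2 + 2 * (of_int v + (of_int e + \<alpha> - \<beta>) / 2)\<^sup>2"
    by (simp add: power2_eq_square field_simps)
  then have modulus: "qpow z ((of_int (u + v + e) + \<alpha>)\<^sup>2) * qpow z ((of_int (u - v) + \<beta>)\<^sup>2)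
      = qpow (2 * z) ((of_int u + (of_int e + \<alpha> + \<beta>) / 2)\<^sup>2)
        * qpow (2 * z) ((of_int v + (of_int e + \<alpha> - \<beta>) / 2)\<^sup>2)"
    by (simp only: qpow_add qpow_double distrib_left)
  have "theta_term \<alpha> s z (u + v + e) * theta_term \<beta> t z (u - v)
      = (cis (pi * s * of_int (u + v + e)) * cis (pi * t * of_int (u - v)))
        * (qpow z ((of_int (u + v + e) + \<alpha>)\<^sup>2) * qpow z ((of_int (u - v) + \<beta>)\<^sup>2))"
    by (simp only: theta_term_def mult_ac)
  also have "\<dots> = cis (pi * s * of_int e) * (cis (pi * (s + t) * of_int u) * cis (pi * (s - t) * of_int v))
        * (qpow (2 * z) ((of_int u + (of_int e + \<alpha> + \<beta>) / 2)\<^sup>2)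
           * qpow (2 * z) ((of_int v + (of_int e + \<alpha> - \<beta>) / 2)\<^sup>2))"
    by (simp only: phase modulus)
  finally show ?thesis
    by (simp only: theta_term_def mult_ac)
qed

text \<open>The pairs \<open>(m, n)\<close> with \<open>m - n\<close> even, resp. odd, are the pairs \<open>(u + v + e, u - v)\<close>
  with \<open>e = 0\<close>, resp. \<open>e = 1\<close>; on each of these classes the double series factors again.\<close>

lemma theta_char_mult:
  assumes "Im z > 0"
  shows "theta_char \<alpha> s z * theta_char \<beta> t z
    = theta_char ((\<alpha> + \<beta>) / 2) (s + t) (2 * z) * theta_char ((\<alpha> - \<beta>) / 2) (s - t) (2 * z)
      + cis (pi * s) * (theta_char ((1 + \<alpha> + \<beta>) / 2) (s + t) (2 * z)
                       * theta_char ((1 + \<alpha> - \<beta>) / 2) (s - t) (2 * z))"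
proof -
  have z2: "Im (2 * z) > 0"
    using assms by simp
  have coset: "(\<Sum>\<^sub>\<infinity>(u, v). theta_term \<alpha> s z (u + v + e) * theta_term \<beta> t z (u - v))
      = cis (pi * s * of_int e) * (theta_char ((of_int e + \<alpha> + \<beta>) / 2) (s + t) (2 * z)
                                 * theta_char ((of_int e + \<alpha> - \<beta>) / 2) (s - t) (2 * z))" for e
    unfolding theta_term_pair_double theta_char_def
    by (simp add: infsum_cmult_right' infsum_mult_infsum summable_theta_term [OF z2] case_prod_unfold)
  have "theta_char \<alpha> s z * theta_char \<beta> t z = (\<Sum>\<^sub>\<infinity>(m, n). theta_term \<alpha> s z m * theta_term \<beta> t z n)"
    unfolding theta_char_def by (intro infsum_mult_infsum summable_theta_term assms)
  also have "\<dots> = (\<Sum>\<^sub>\<infinity>(u, v). theta_term \<alpha> s z (u + v + 0) * theta_term \<beta> t z (u - v))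
      + (\<Sum>\<^sub>\<infinity>(u, v). theta_term \<alpha> s z (u + v + 1) * theta_term \<beta> t z (u - v))"
    by (subst infsum_int_pairs_parity_split)
      (simp_all add: summable_on_mult_pairs summable_theta_term assms)
  finally show ?thesis
    unfolding coset by simp
qed

lemma theta_char_shift: "theta_char (\<alpha> + 1) \<beta> z = cis (- pi * \<beta>) * theta_char \<alpha> \<beta> z"
proof -
  have "theta_char (\<alpha> + 1) \<beta> z = (\<Sum>\<^sub>\<infinity>m. cis (- pi * \<beta>) * theta_term \<alpha> \<beta> z m)"
    unfolding theta_char_def
    by (rule infsum_reindex_bij_witness [where j = "\<lambda>m. m + 1" and i = "\<lambda>m. m - 1"])
      (auto simp: theta_term_def cis_mult algebra_simps)
  then show ?thesis
    by (simp add: theta_char_def infsum_cmult_right')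
qed

lemma theta_char_uminus: "theta_char (- \<alpha>) (- \<beta>) z = theta_char \<alpha> \<beta> z"
  unfolding theta_char_def
  by (rule infsum_reindex_bij_witness [where j = uminus and i = uminus])
    (auto simp: theta_term_def power2_eq_square algebra_simps)

lemma theta_char_add_even: "theta_char \<alpha> (\<beta> + 2 * of_int k) z = theta_char \<alpha> \<beta> z"
proof -
  have "cis (pi * (\<beta> + 2 * of_int k) * of_int m) = cis (pi * \<beta> * of_int m)" for m
  proof -
    have "cis (pi * (\<beta> + 2 * of_int k) * of_int m) = cis (pi * \<beta> * of_int m) * cis (2 * pi * of_int (k * m))"
      by (simp add: cis_mult algebra_simps)
    then show ?thesis
      by simp
  qed
  then show ?thesis
    by (simp add: theta_char_def theta_term_def)
qed

lemma theta_char_half_one: "theta_char (1/2) 1 z = 0"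
proof -
  have "theta_char (1/2) 1 z = - theta_char (- 1/2) 1 z"
    using theta_char_shift [of "- 1/2" 1 z] by (simp add: complex_eq_iff)
  also have "theta_char (- 1/2) 1 z = theta_char (- 1/2) (- 1) z"
    using theta_char_add_even [of "- 1/2" "- 1" 1 z] by simp
  also have "\<dots> = theta_char (1/2) 1 z"
    using theta_char_uminus [of "1/2" 1 z] by simp
  finally show ?thesis
    by simp
qed

lemma theta3_square_double:
  assumes "Im z > 0"
  shows "theta3 z ^ 2 = theta3 (2 * z) ^ 2 + theta2 (2 * z) ^ 2"
  using theta_char_mult [OF assms, of 0 0 0 0]
  by (simp add: theta3_eq_theta_char theta2_eq_theta_char power2_eq_square)

lemma theta4_square_double:
  assumes "Im z > 0"
  shows "theta4 z ^ 2 = theta3 (2 * z) ^ 2 - theta2 (2 * z) ^ 2"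
  using theta_char_mult [OF assms, of 0 1 0 1] theta_char_add_even [of _ 0 1 "2 * z"]
  by (simp add: theta3_eq_theta_char theta2_eq_theta_char theta4_eq_theta_char power2_eq_square)

lemma theta2_square_double:
  assumes "Im z > 0"
  shows "theta2 z ^ 2 = 2 * theta2 (2 * z) * theta3 (2 * z)"
  using theta_char_mult [OF assms, of "1/2" 0 "1/2" 0] theta_char_shift [of 0 0 "2 * z"]
  by (simp add: theta3_eq_theta_char theta2_eq_theta_char power2_eq_square)

lemma theta3_theta4_double:
  assumes "Im z > 0"
  shows "theta3 z * theta4 z = theta4 (2 * z) ^ 2"
  using theta_char_mult [OF assms, of 0 0 0 1] theta_char_add_even [of _ "- 1" 1 "2 * z"]
  by (simp add: theta3_eq_theta_char theta4_eq_theta_char theta_char_half_one power2_eq_square)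

lemma jacobi_identity:
  assumes "Im z > 0"
  shows "theta3 z ^ 4 = theta2 z ^ 4 + theta4 z ^ 4"
proof -
  have "theta3 z ^ 4 - theta4 z ^ 4 = (theta3 z ^ 2 - theta4 z ^ 2) * (theta3 z ^ 2 + theta4 z ^ 2)"
    by (simp add: algebra_simps flip: power_add)
  also have "\<dots> = (2 * theta2 (2 * z) * theta3 (2 * z)) ^ 2"
    unfolding theta3_square_double [OF assms] theta4_square_double [OF assms]
    by (simp add: power2_eq_square algebra_simps)
  also have "\<dots> = (theta2 z ^ 2) ^ 2"
    unfolding theta2_square_double [OF assms] ..
  also have "\<dots> = theta2 z ^ 4"
    by simp
  finally show ?thesis
    by (simp add: algebra_simps)
qed

section \<open>Nonvanishing on the upper half-plane\<close>

lemma norm_theta_term_le: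
  assumes "Im w \<ge> 0" "real k \<le> (of_int m + \<alpha>)\<^sup>2"
  shows "norm (theta_term \<alpha> \<beta> w m) \<le> exp (- pi * Im w) ^ k"
  using assms by (simp add: norm_theta_term flip: exp_of_nat_mult) (metis mult.commute mult_right_mono)

lemma Im_gt_ln3_div_pi:
  assumes "Im w > ln 3 / pi"
  shows "Im w > 0" and "exp (- pi * Im w) < 1/3"
proof -
  have "ln 3 / pi > 0"
    by simp
  with assms show "Im w > 0"
    by linarith
  have "- pi * Im w < - ln 3"
    using assms by (simp add: field_simps)
  then have "exp (- pi * Im w) < exp (- ln 3)"
    by simp
  then show "exp (- pi * Im w) < 1/3"
    by (simp add: exp_minus)
qed

lemma theta4_nonzero_large_Im:
  assumes "Im w > ln 3 / pi"
  shows "theta4 w \<noteq> 0"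
proof
  assume zero: "theta4 w = 0"
  define r where "r = exp (- pi * Im w)"
  have w: "Im w > 0"
    using assms by (rule Im_gt_ln3_div_pi)
  have r: "0 \<le> r" "r < 1/3"
    using Im_gt_ln3_div_pi(2) [OF assms] by (simp_all add: r_def)
  have "norm (theta_char 0 1 w - sum (theta_term 0 1 w) {0}) \<le> 2 * r / (1 - r)"
    unfolding theta_char_def
  proof (rule norm_infsum_minus_sum_le [OF summable_theta_term [OF w]])
    fix m :: int
    have "real_of_int \<bar>m\<bar> \<le> real_of_int (m\<^sup>2)"
      by (simp only: of_int_le_iff abs_le_square_int)
    then have "real (nat \<bar>m\<bar>) \<le> (of_int m + 0)\<^sup>2"
      by simp
    then show "norm (theta_term 0 1 w m) \<le> r ^ nat \<bar>m\<bar>"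
      unfolding r_def using w by (intro norm_theta_term_le) auto
  qed (use r in auto)
  then have "1 \<le> 2 * r / (1 - r)"
    using zero by (simp add: theta4_eq_theta_char theta_term_def qpow_def)
  with r show False
    by (simp add: field_simps)
qed

lemma theta2_nonzero_large_Im:
  assumes "Im w > ln 3 / pi"
  shows "theta2 w \<noteq> 0"
proof -
  define r where "r = exp (- pi * Im w)"
  define T where "T m = qpow w ((of_int m)\<^sup>2 + of_int m)" for m :: int
  have w: "Im w > 0"
    using assms by (rule Im_gt_ln3_div_pi)
  have r: "0 \<le> r" "r < 1/3"
    using Im_gt_ln3_div_pi(2) [OF assms] by (simp_all add: r_def)
  have factor: "theta_term (1/2) 0 w m = qpow w (1/4) * T m" for m
    unfolding theta_term_def T_def qpow_add by (simp add: power2_eq_square algebra_simps)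
  have "(\<lambda>m. qpow w (1/4) * T m) summable_on UNIV"
    using summable_theta_term [OF w, of "1/2" 0] unfolding factor .
  then have summable: "T summable_on UNIV"
    by (simp add: summable_on_cmult_right' qpow_nonzero)
  have theta2: "theta2 w = qpow w (1/4) * infsum T UNIV"
    unfolding theta2_eq_theta_char theta_char_def factor by (rule infsum_cmult_right')
  have "norm (infsum T UNIV - sum T {0, - 1}) \<le> 2 * r / (1 - r)"
  proof (rule norm_infsum_minus_sum_le [OF summable])
    fix m :: int
    assume "m \<notin> {0, - 1}"
    then have "real_of_int \<bar>m\<bar> \<le> real_of_int (m\<^sup>2 + m)"
      by (simp only: of_int_le_iff) (rule abs_le_square_plus_int)
    then have "exp (- pi * Im w * ((of_int m)\<^sup>2 + of_int m)) \<le> exp (- pi * Im w) ^ nat \<bar>m\<bar>"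
      using w by (simp add: mult_left_mono flip: exp_of_nat_mult)
    then show "norm (T m) \<le> r ^ nat \<bar>m\<bar>"
      by (simp add: T_def norm_qpow r_def)
  qed (use r in auto)
  moreover have "sum T {0, - 1} = 2"
    by (simp add: T_def qpow_def)
  moreover have "2 * r / (1 - r) < 2"
    using r by (simp add: field_simps)
  ultimately have "infsum T UNIV \<noteq> 0"
    by auto
  then show ?thesis
    unfolding theta2 by (simp add: qpow_nonzero)
qed

lemma nonzero_by_doubling:
  fixes f :: "complex \<Rightarrow> 'a :: zero"
  assumes double: "\<And>w. Im w > 0 \<Longrightarrow> f w = 0 \<Longrightarrow> f (2 * w) = 0"
    and large: "\<And>w. Im w > c \<Longrightarrow> f w \<noteq> 0"
    and "Im z > 0"
  shows "f z \<noteq> 0"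
proof
  assume "f z = 0"
  then have iterate: "f (2 ^ k * z) = 0 \<and> Im (2 ^ k * z) = 2 ^ k * Im z" for k
    by (induction k) (use double assms(3) in \<open>auto simp: mult.assoc\<close>)
  obtain k where "c / Im z < 2 ^ k"
    using real_arch_pow [of 2 "c / Im z"] by auto
  then have "Im (2 ^ k * z) > c"
    using iterate [of k] assms(3) by (simp add: field_simps)
  with large iterate show False
    by blast
qed

lemma theta4_nonzero:
  assumes "Im z > 0"
  shows "theta4 z \<noteq> 0"
proof (rule nonzero_by_doubling [OF _ theta4_nonzero_large_Im assms])
  fix w :: complex
  assume "Im w > 0" "theta4 w = 0"
  then show "theta4 (2 * w) = 0"
    using theta3_theta4_double [of w] by simp
qed

lemma theta3_nonzero:
  assumes "Im z > 0"
  shows "theta3 z \<noteq> 0"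
  using theta3_theta4_double [OF assms] theta4_nonzero [of "2 * z"] assms by auto

lemma theta2_nonzero:
  assumes "Im z > 0"
  shows "theta2 z \<noteq> 0"
proof (rule nonzero_by_doubling [OF _ theta2_nonzero_large_Im assms])
  fix w :: complex
  assume "Im w > 0" "theta2 w = 0"
  then show "theta2 (2 * w) = 0"
    using theta2_square_double [of w] theta3_nonzero [of "2 * w"] by simp
qed

section \<open>The expansion of \<open>rho\<close>\<close>

lemma E4_eq_theta_fourth_powers:
  assumes "Im z > 0"
  shows "E4 z = (theta2 z ^ 4)\<^sup>2 + theta2 z ^ 4 * theta4 z ^ 4 + (theta4 z ^ 4)\<^sup>2"
proof -
  have "E4 z = ((theta2 z ^ 4)\<^sup>2 + (theta3 z ^ 4)\<^sup>2 + (theta4 z ^ 4)\<^sup>2) / 2"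
    by (simp add: E4_def flip: power_mult)
  also have "\<dots> = ((theta2 z ^ 4)\<^sup>2 + (theta2 z ^ 4 + theta4 z ^ 4)\<^sup>2 + (theta4 z ^ 4)\<^sup>2) / 2"
    by (simp only: jacobi_identity [OF assms])
  also have "\<dots> = (theta2 z ^ 4)\<^sup>2 + theta2 z ^ 4 * theta4 z ^ 4 + (theta4 z ^ 4)\<^sup>2"
    by (simp add: power2_eq_square field_simps)
  finally show ?thesis .
qed

lemma Delta24_power_eq:
  "2 ^ (8 * i) * Delta24 z ^ i = (theta2 z ^ 4 * theta4 z ^ 4 * theta3 z ^ 4) ^ (2 * i)"
proof -
  have "2 ^ 8 * Delta24 z = (theta2 z ^ 4 * theta4 z ^ 4 * theta3 z ^ 4) ^ 2"
    by (simp add: Delta24_def power_divide power_mult_distrib mult_ac flip: power_mult)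
  then have "(2 ^ 8 * Delta24 z) ^ i = (theta2 z ^ 4 * theta4 z ^ 4 * theta3 z ^ 4) ^ (2 * i)"
    by (simp only: power_mult)
  then show ?thesis
    by (simp only: power_mult_distrib power_mult)
qed

lemma rho_eq_fourth_powers:
  "rho n z = ((theta3 z ^ 4) ^ (2 * n + 3) - (theta2 z ^ 4) ^ (2 * n + 3) - (theta4 z ^ 4) ^ (2 * n + 3))
    / (theta2 z ^ 4 * theta4 z ^ 4 * theta3 z ^ 4)"
proof -
  have "x ^ (8 * (n + 1) + 4) = (x ^ 4) ^ (2 * n + 3)" for x :: complex
    by (simp add: add.commute flip: power_mult)
  then show ?thesis
    by (simp add: rho_def power_mult_distrib mult_ac)
qed

theorem theorem2p4:
  fixes z :: complex and n :: nat
  assumes "Im z > 0" and "n \<ge> 1"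
  shows "rho n z = (\<Sum>i=0..n div 3.
           (of_nat (2*n+3) / of_nat (2*i+1)) * of_nat ((n - i) choose (2*i)) * 2^(8*i)
           * Delta24 z ^ i * E4 z ^ (n - 3*i))"
proof -
  define a b where "a = theta2 z ^ 4" and "b = theta4 z ^ 4"
  have jacobi: "theta3 z ^ 4 = a + b"
    unfolding a_def b_def by (rule jacobi_identity [OF assms(1)])
  have nonzero: "a * b * (a + b) \<noteq> 0"
    unfolding jacobi [symmetric] unfolding a_def b_def
    using theta2_nonzero theta3_nonzero theta4_nonzero assms(1) by simp
  have Delta24: "(a * b * (a + b)) ^ (2 * i) = 2 ^ (8 * i) * Delta24 z ^ i" for i
    unfolding Delta24_power_eq a_def b_def jacobi ..
  have E4: "a\<^sup>2 + a * b + b\<^sup>2 = E4 z"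
    unfolding E4_eq_theta_fourth_powers [OF assms(1)] a_def b_def ..
  have "rho n z = ((a + b) ^ (2 * n + 3) - a ^ (2 * n + 3) - b ^ (2 * n + 3)) / (a * b * (a + b))"
    unfolding rho_eq_fourth_powers jacobi a_def [symmetric] b_def [symmetric] ..
  also have "\<dots> = (\<Sum>i=0..n div 3. of_nat (2 * n + 3) / of_nat (2 * i + 1) * of_nat ((n - i) choose (2 * i))
       * (a * b * (a + b)) ^ (2 * i) * (a\<^sup>2 + a * b + b\<^sup>2) ^ (n - 3 * i))"
    unfolding power_sum_difference_expansion using nonzero
    by (rule nonzero_mult_div_cancel_left)
  finally show ?thesis
    unfolding Delta24 E4 by (simp only: mult.assoc)
qed

end
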